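(* In a combinatorial auction with single-dimensional signals and SOS valuations, fix a true signal profile $\mathbf{s}$ (reported truthfully) and a welfare-maximizing allocation $T^*=(T_i^* )_i$ at $\mathbf{s}$. Then the expected welfare $\mathbb{E}[\sum_i v_{i\tilde T_i}(\mathbf{s})]$ of the Random Sampling mechanism is at least $\frac14\mathsf{OTHER}$, where $\mathsf{OTHER}=\sum_i v_{iT_i^*}(\mathbf{s}_{-i},0_i)$.
   Context: Setting: $n$ agents, $m$ items; agent $i$ has private signal $s_i\ge0$; her value for bundle $T$ is $v_{iT}(\mathbf{s})\ge0$, public, weakly increasing in each coordinate, strictly in $s_i$; each $v_{iT}$ is SOS: for every coordinate $j$, $s_j$, $\delta\ge0$, and $\mathbf{s}'_{-j}\le\mathbf{s}_{-j}$ coordinate-wise, $v(\mathbf{s}'_{-j},s_j+\delta)-v(\mathbf{s}'_{-j},s_j)\ge v(\mathbf{s}_{-j},s_j+\delta)-v(\mathbf{s}_{-j},s_j)$. $(\mathbf{s}_{-i},0_i)$ is $\mathbf{s}$ with $s_i$ set to $0$. Random Sampling (on reports $\mathbf{s}$): split agents uniformly at random into $A,B$; for $i\in B$ let $\tilde v_{iT}=v_{iT}(\mathbf{s}_A,\mathbf{0}_B)$ (all signals of $B$, including $i$'s own, set to $0$), for $i\in A$ let $\tilde v_{iT}=0$; choose $\tilde T\in\arg\max\sum_{i\in B}\tilde v_{i\tilde T_i}$ over allocations to agents of $B$; no payments. *)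

theory Defs
  imports Complex_Main
begin

text \<open>Agents are the elements of a finite type 'n, items the elements of a finite type 'm.
  A signal profile is a function 'n \<Rightarrow> real; only nonnegative profiles are meaningful.
  A valuation is v :: 'n \<Rightarrow> 'm set \<Rightarrow> ('n \<Rightarrow> real) \<Rightarrow> real, v i T s = v_{iT}(s).\<close>

definition nonneg_profile :: "('n \<Rightarrow> real) \<Rightarrow> bool" where
  "nonneg_profile s \<longleftrightarrow> (\<forall>j. 0 \<le> s j)"

definition is_allocation :: "('n \<Rightarrow> 'm set) \<Rightarrow> bool" where
  "is_allocation T \<longleftrightarrow> (\<forall>i j. i \<noteq> j \<longrightarrow> T i \<inter> T j = {})"

definition weakly_increasing :: "(('n \<Rightarrow> real) \<Rightarrow> real) \<Rightarrow> bool" where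
  "weakly_increasing f \<longleftrightarrow>
     (\<forall>s s'. nonneg_profile s \<and> (\<forall>j. s j \<le> s' j) \<longrightarrow> f s \<le> f s')"

definition strictly_increasing_in :: "'n \<Rightarrow> (('n \<Rightarrow> real) \<Rightarrow> real) \<Rightarrow> bool" where
  "strictly_increasing_in i f \<longleftrightarrow>
     (\<forall>s \<delta>. nonneg_profile s \<and> 0 < \<delta> \<longrightarrow> f s < f (s(i := s i + \<delta>)))"

definition SOS :: "(('n \<Rightarrow> real) \<Rightarrow> real) \<Rightarrow> bool" where
  "SOS f \<longleftrightarrow>
     (\<forall>j s s' \<delta>. nonneg_profile s \<and> nonneg_profile s' \<and> 0 \<le> \<delta> \<and>
        s' j = s j \<and> (\<forall>k. k \<noteq> j \<longrightarrow> s' k \<le> s k) \<longrightarrow>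
        f (s(j := s j + \<delta>)) - f s \<le> f (s'(j := s j + \<delta>)) - f s')"

definition valid_valuations :: "('n \<Rightarrow> 'm set \<Rightarrow> ('n \<Rightarrow> real) \<Rightarrow> real) \<Rightarrow> bool" where
  "valid_valuations v \<longleftrightarrow>
     (\<forall>i T. (\<forall>s. nonneg_profile s \<longrightarrow> 0 \<le> v i T s)
          \<and> weakly_increasing (v i T)
          \<and> strictly_increasing_in i (v i T)
          \<and> SOS (v i T))"

definition welfare :: "('n::finite \<Rightarrow> 'm set \<Rightarrow> ('n \<Rightarrow> real) \<Rightarrow> real) \<Rightarrow> ('n \<Rightarrow> 'm set)
    \<Rightarrow> ('n \<Rightarrow> real) \<Rightarrow> real" where
  "welfare v T s = (\<Sum>i\<in>UNIV. v i (T i) s)"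

definition welfare_maximizing ::
  "('n::finite \<Rightarrow> 'm set \<Rightarrow> ('n \<Rightarrow> real) \<Rightarrow> real) \<Rightarrow> ('n \<Rightarrow> real) \<Rightarrow> ('n \<Rightarrow> 'm set) \<Rightarrow> bool" where
  "welfare_maximizing v s T \<longleftrightarrow> is_allocation T \<and>
     (\<forall>T'. is_allocation T' \<longrightarrow> welfare v T' s \<le> welfare v T s)"

definition OTHER :: "('n::finite \<Rightarrow> 'm set \<Rightarrow> ('n \<Rightarrow> real) \<Rightarrow> real) \<Rightarrow> ('n \<Rightarrow> real)
    \<Rightarrow> ('n \<Rightarrow> 'm set) \<Rightarrow> real" where
  "OTHER v s T = (\<Sum>i\<in>UNIV. v i (T i) (s(i := 0)))"

definition zero_on :: "'n set \<Rightarrow> ('n \<Rightarrow> real) \<Rightarrow> ('n \<Rightarrow> real)" where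
  "zero_on B s = (\<lambda>j. if j \<in> B then 0 else s j)"

definition allocation_to :: "'n set \<Rightarrow> ('n \<Rightarrow> 'm set) \<Rightarrow> bool" where
  "allocation_to B T \<longleftrightarrow> is_allocation T \<and> (\<forall>i. i \<notin> B \<longrightarrow> T i = {})"

definition RS_estimate :: "('n::finite \<Rightarrow> 'm set \<Rightarrow> ('n \<Rightarrow> real) \<Rightarrow> real) \<Rightarrow> ('n \<Rightarrow> real)
    \<Rightarrow> 'n set \<Rightarrow> ('n \<Rightarrow> 'm set) \<Rightarrow> real" where
  "RS_estimate v s B T = (\<Sum>i\<in>B. v i (T i) (zero_on B s))"

text \<open>A (arbitrary tie-breaking) outcome rule of Random Sampling: for each realisation B of
  the random set B (A = complement), TT B is an argmax of the estimated welfare over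
  allocations to agents of B.\<close>
definition RS_outcome :: "('n::finite \<Rightarrow> 'm set \<Rightarrow> ('n \<Rightarrow> real) \<Rightarrow> real) \<Rightarrow> ('n \<Rightarrow> real)
    \<Rightarrow> ('n set \<Rightarrow> 'n \<Rightarrow> 'm set) \<Rightarrow> bool" where
  "RS_outcome v s TT \<longleftrightarrow> (\<forall>B. allocation_to B (TT B) \<and>
     (\<forall>T. allocation_to B T \<longrightarrow> RS_estimate v s B T \<le> RS_estimate v s B (TT B)))"

definition RS_expected_welfare :: "('n::finite \<Rightarrow> 'm set \<Rightarrow> ('n \<Rightarrow> real) \<Rightarrow> real) \<Rightarrow> ('n \<Rightarrow> real)
    \<Rightarrow> ('n set \<Rightarrow> 'n \<Rightarrow> 'm set) \<Rightarrow> real" where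
  "RS_expected_welfare v s TT =
     (\<Sum>B\<in>(UNIV :: 'n set set). welfare v (TT B) s) / 2 ^ card (UNIV :: 'n set)"

end

theory Submission
  imports Defs
begin

text \<open>For an agent i and a split with i \<in> B, pair B with the mirrored split (-B) \<union> {i}, in which
  i is again sampled but every other agent changes side. SOS makes "revealing" signals submodular,
  so the two estimated values of i's optimal bundle together dominate its value at (s_{-i}, 0_i).
  Averaging over the splits containing i (half of all splits) gives a quarter of OTHER, and on every
  split the mechanism's true welfare dominates its estimate of the optimum restricted to B.\<close>

lemma nonneg_profile_zero_on: "nonneg_profile s \<Longrightarrow> nonneg_profile (zero_on B s)"
  by (simp add: nonneg_profile_def zero_on_def)

lemma SOS_zero_on_submodular:
  assumes sos: "SOS f" and s: "nonneg_profile s" and "finite Q" and "P \<inter> Q = {}"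
  shows "f (zero_on (-(P \<union> Q)) s) + f (zero_on UNIV s)
           \<le> f (zero_on (-P) s) + f (zero_on (-Q) s)"
  using \<open>finite Q\<close> \<open>P \<inter> Q = {}\<close>
proof (induction Q rule: finite_induct)
  case empty
  then show ?case by simp
next
  case (insert j Q)
  then have "j \<notin> P" "j \<notin> Q" and IH: "f (zero_on (-(P \<union> Q)) s) + f (zero_on UNIV s)
                                          \<le> f (zero_on (-P) s) + f (zero_on (-Q) s)"
    by auto
  define big where "big = zero_on (-(P \<union> Q)) s"
  define small where "small = zero_on (-Q) s"
  have "f (big(j := big j + s j)) - f big \<le> f (small(j := big j + s j)) - f small"
    using sos[unfolded SOS_def, rule_format, of big small "s j" j] s \<open>j \<notin> P\<close> \<open>j \<notin> Q\<close>
    by (auto simp: big_def small_def zero_on_def nonneg_profile_def)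
  moreover have "big(j := big j + s j) = zero_on (-(P \<union> insert j Q)) s"
    and "small(j := big j + s j) = zero_on (-(insert j Q)) s"
    using \<open>j \<notin> P\<close> \<open>j \<notin> Q\<close> by (auto simp: big_def small_def zero_on_def)
  ultimately show ?case using IH by (simp add: big_def small_def)
qed

lemma mirrored_split_value_bound:
  assumes vv: "valid_valuations v" and s: "nonneg_profile s" and "finite B" and "i \<in> B"
  shows "v i T (s(i := 0)) \<le> v i T (zero_on B s) + v i T (zero_on (-B \<union> {i}) s)"
proof -
  have "v i T (zero_on (-(-B \<union> (B - {i}))) s) + v i T (zero_on UNIV s)
          \<le> v i T (zero_on (-(-B)) s) + v i T (zero_on (-(B - {i})) s)"
    using vv s \<open>finite B\<close> by (intro SOS_zero_on_submodular) (auto simp: valid_valuations_def)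
  moreover have "zero_on (-(-B \<union> (B - {i}))) s = s(i := 0)"
    using \<open>i \<in> B\<close> by (auto simp: zero_on_def)
  moreover have "-(B - {i}) = -B \<union> {i}" by auto
  moreover have "0 \<le> v i T (zero_on UNIV s)"
    using vv nonneg_profile_zero_on[OF s] by (simp add: valid_valuations_def)
  ultimately show ?thesis by simp
qed

lemma sum_splits_containing_const:
  fixes i :: "'n::finite"
  shows "(\<Sum>B\<in>UNIV. if i \<in> B then c else 0) * 2 = 2 ^ card (UNIV :: 'n set) * (c::real)"
proof -
  have complement: "(\<Sum>B\<in>UNIV. if i \<in> B then c else 0) = (\<Sum>B\<in>UNIV. if i \<in> -B then c else 0)"
    by (rule sum.reindex_bij_witness[of _ uminus uminus]) auto
  have "(\<Sum>B\<in>UNIV. if i \<in> B then c else 0) + (\<Sum>B\<in>UNIV. if i \<in> -B then c else 0)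
          = (\<Sum>B\<in>(UNIV :: 'n set set). c)"
    by (subst sum.distrib[symmetric]) (rule sum.cong, auto)
  also have "\<dots> = 2 ^ card (UNIV :: 'n set) * c"
    using card_Pow[of "UNIV :: 'n set"] by simp
  finally show ?thesis using complement by simp
qed

lemma sum_splits_containing_estimate_bound:
  fixes v :: "'n::finite \<Rightarrow> 'm set \<Rightarrow> ('n \<Rightarrow> real) \<Rightarrow> real"
  assumes vv: "valid_valuations v" and s: "nonneg_profile s"
  shows "2 ^ card (UNIV :: 'n set) * v i T (s(i := 0))
           \<le> (\<Sum>B\<in>UNIV. if i \<in> B then v i T (zero_on B s) else 0) * 4"
proof -
  define h where "h B = v i T (zero_on B s)" for B
  define mirror where "mirror B = (-B - {i}) \<union> (B \<inter> {i})" for B :: "'n set"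
  have mirror_mirror: "mirror (mirror B) = B" and mirror_mem: "i \<in> mirror B \<longleftrightarrow> i \<in> B" for B
    by (auto simp: mirror_def)
  have reindex: "(\<Sum>B\<in>UNIV. if i \<in> B then h (mirror B) else 0) = (\<Sum>B\<in>UNIV. if i \<in> B then h B else 0)"
    by (rule sum.reindex_bij_witness[of _ mirror mirror]) (auto simp: mirror_mirror mirror_mem)
  have "(\<Sum>B\<in>UNIV. if i \<in> B then v i T (s(i := 0)) else 0)
          \<le> (\<Sum>B\<in>UNIV. if i \<in> B then h B + h (mirror B) else 0)"
  proof (rule sum_mono)
    fix B :: "'n set"
    show "(if i \<in> B then v i T (s(i := 0)) else 0) \<le> (if i \<in> B then h B + h (mirror B) else 0)"
    proof (cases "i \<in> B")
      case True
      then have "mirror B = -B \<union> {i}" by (auto simp: mirror_def)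
      then show ?thesis using True mirrored_split_value_bound[OF vv s finite True] by (simp add: h_def)
    qed simp
  qed
  also have "\<dots> = (\<Sum>B\<in>UNIV. if i \<in> B then h B else 0) * 2"
  proof -
    have "(\<Sum>B\<in>UNIV. if i \<in> B then h B + h (mirror B) else 0)
            = (\<Sum>B\<in>UNIV. if i \<in> B then h B else 0) + (\<Sum>B\<in>UNIV. if i \<in> B then h (mirror B) else 0)"
      by (subst sum.distrib[symmetric]) (rule sum.cong, auto)
    then show ?thesis unfolding reindex by simp
  qed
  finally have "(\<Sum>B\<in>UNIV. if i \<in> B then v i T (s(i := 0)) else 0) * 2
                  \<le> (\<Sum>B\<in>UNIV. if i \<in> B then h B else 0) * 4"
    by simp
  then show ?thesis
    unfolding sum_splits_containing_const h_def .
qed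

lemma estimate_of_optimum_le_welfare:
  assumes vv: "valid_valuations v" and s: "nonneg_profile s"
    and opt: "welfare_maximizing v s Tstar" and rs: "RS_outcome v s TT"
  shows "(\<Sum>i\<in>UNIV. if i \<in> B then v i (Tstar i) (zero_on B s) else 0) \<le> welfare v (TT B) s"
proof -
  define restricted where "restricted i = (if i \<in> B then Tstar i else {})" for i
  have "allocation_to B restricted"
    using opt by (auto simp: welfare_maximizing_def allocation_to_def is_allocation_def restricted_def)
  then have "RS_estimate v s B restricted \<le> RS_estimate v s B (TT B)"
    using rs by (simp add: RS_outcome_def)
  moreover have "RS_estimate v s B restricted
      = (\<Sum>i\<in>UNIV. if i \<in> B then v i (Tstar i) (zero_on B s) else 0)"
    by (simp add: RS_estimate_def sum.If_cases restricted_def)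
  moreover have "RS_estimate v s B (TT B) \<le> welfare v (TT B) s"
  proof -
    have "RS_estimate v s B (TT B) = (\<Sum>i\<in>UNIV. if i \<in> B then v i (TT B i) (zero_on B s) else 0)"
      by (simp add: RS_estimate_def sum.If_cases)
    also have "\<dots> \<le> welfare v (TT B) s"
      unfolding welfare_def
    proof (rule sum_mono)
      fix i
      have "v i (TT B i) (zero_on B s) \<le> v i (TT B i) s"
        using vv s by (auto simp: valid_valuations_def weakly_increasing_def zero_on_def nonneg_profile_def)
      moreover have "0 \<le> v i (TT B i) s" using vv s by (simp add: valid_valuations_def)
      ultimately show "(if i \<in> B then v i (TT B i) (zero_on B s) else 0) \<le> v i (TT B i) s"
        by simp
    qed
    finally show ?thesis .
  qed
  ultimately show ?thesis by linarith
qed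

theorem mainTheorem7:
  fixes v :: "'n::finite \<Rightarrow> 'm::finite set \<Rightarrow> ('n \<Rightarrow> real) \<Rightarrow> real"
    and s :: "'n \<Rightarrow> real"
    and Tstar :: "'n \<Rightarrow> 'm set"
    and TT :: "'n set \<Rightarrow> 'n \<Rightarrow> 'm set"
  assumes "valid_valuations v"
    and "nonneg_profile s"
    and "welfare_maximizing v s Tstar"
    and "RS_outcome v s TT"
  shows "RS_expected_welfare v s TT \<ge> OTHER v s Tstar / 4"
proof -
  let ?N = "2 ^ card (UNIV :: 'n set) :: real"
  let ?est = "\<lambda>i B. if i \<in> B then v i (Tstar i) (zero_on B s) else 0"
  have "?N * OTHER v s Tstar = (\<Sum>i\<in>UNIV. ?N * v i (Tstar i) (s(i := 0)))"
    by (simp add: OTHER_def sum_distrib_left)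
  also have "\<dots> \<le> (\<Sum>i\<in>UNIV. (\<Sum>B\<in>UNIV. ?est i B) * 4)"
    by (rule sum_mono) (rule sum_splits_containing_estimate_bound[OF assms(1,2)])
  also have "\<dots> = 4 * (\<Sum>B\<in>UNIV. \<Sum>i\<in>UNIV. ?est i B)"
    by (subst sum.swap) (simp add: sum_distrib_left mult.commute)
  also have "\<dots> \<le> 4 * (\<Sum>B\<in>UNIV. welfare v (TT B) s)"
    using sum_mono[OF estimate_of_optimum_le_welfare[OF assms]] by simp
  finally show ?thesis
    unfolding RS_expected_welfare_def by (simp add: field_simps)
qed

end
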